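(* Assume the setting, hypotheses and Rothe scheme described in the context. There exist $\tau_0>0$ and a constant $c>0$ independent of $\tau$ such that for every $N\in\mathbb N$ with $\tau=T/N<\tau_0$ and every solution $\{u_\tau^n\}_{n=1}^N$, $\{\xi_\tau^n\}_{n=1}^N$ of Problem $\mathcal P_\tau$ (with $u_\tau^0$ the given initial element) the following hold: $$\tau\sum_{n=0}^N\|u_\tau^n\|^2\le c,\qquad \max_{n=0,\dots,N}|u_\tau^n|<c,\qquad \tau\sum_{n=1}^N\|\xi_\tau^n\|_{U^*}^2\le c,\qquad \tau\Big\|\frac{u_\tau^1-u_\tau^0}{\tau}\Big\|_{V^*}^2\le c,$$ $$\tau\sum_{n=2}^N\Big\|\frac1\tau\Big(\tfrac32u_\tau^n-2u_\tau^{n-1}+\tfrac12u_\tau^{n-2}\Big)\Big\|_{V^*}^2\le c,\qquad \sum_{n=2}^N|u_\tau^n-2u_\tau^{n-1}+u_\tau^{n-2}|^2\le c.$$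
   Context: $V$ is a real reflexive separable Banach space with norm $\|\cdot\|$, $H$ is a real separable Hilbert space with inner product $(\cdot,\cdot)$ and norm $|\cdot|$, identified with its dual, and $V\subset H\subset V^*$ with dense continuous embeddings, the embedding $V\subset H$ being compact; $\langle\cdot,\cdot\rangle$ is the $V^*\times V$ duality pairing, with $\langle u,v\rangle=(u,v)$ for $u\in H$, $v\in V$. $U$ is a reflexive Banach space, $T>0$. For locally Lipschitz $J\colon U\to\mathbb R$, $J^0(x;v)=\limsup_{y\to x,\lambda\downarrow0}\frac{J(y+\lambda v)-J(y)}{\lambda}$ and $\partial J(x)=\{\xi\in U^*:J^0(x;v)\ge\langle\xi,v\rangle_{U^*\times U}\ \forall v\in U\}$ (Clarke subdifferential); $\iota^*$ is the adjoint of $\iota$. Hypotheses: (H(A)) $A\colon V\to V^*$ is pseudomonotone (whenever $v_n\to v$ weakly in $V$ and $\limsup_n\langle Av_n,v_n-v\rangle\le0$, then $\langle Av,v-y\rangle\le\liminf_n\langle Av_n,v_n-y\rangle$ for all $y\in V$), $\|Av\|_{V^*}\le a+b\|v\|$ ($a\ge0,b>0$), $\langle Av,v\rangle\ge\alpha\|v\|^2-\beta|v|^2$ ($\alpha>0,\beta\ge0$) for all $v\in V$. (H(J)) $J$ is locally Lipschitz and $\|\xi\|_{U^*}\le d(1+\|u\|_U)$ for all $u\in U$, $\xi\in\partial J(u)$, $d>0$. (H($\iota$)) $\iota\colon V\to U$ is linear, continuous, compact, and $\iota=\iota_2\circ\iota_1$ where $Z$ is a Banach space with $V\subset Z\subset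 H$, $V\subset Z$ compact, $Z\subset H$ continuous, $\iota_1\colon V\to Z$ the identity and $\iota_2\colon Z\to U$ linear continuous. (H(f)) $f\in L^2(0,T;V^* )$. (H(0)) $u_0\in H$. Rothe scheme: for $N\in\mathbb N$, $\tau=T/N$, an element $u_\tau^0\in V$ is given for each $\tau$, such that $u_\tau^0\to u_0$ strongly in $H$ as $\tau\to0$ and $\|u_\tau^0\|\le c_0/\sqrt\tau$ with $c_0$ independent of $\tau$. Set $f_\tau^1=\frac1\tau\int_0^\tau f\,dt$ and $f_\tau^n=\frac{3}{2\tau}\int_{(n-1)\tau}^{n\tau}f\,dt-\frac1{2\tau}\int_{(n-2)\tau}^{(n-1)\tau}f\,dt$, $n=2,\dots,N$. Problem $\mathcal P_\tau$: find $\{u_\tau^n\}_{n=1}^N\subset V$ and $\{\xi_\tau^n\}_{n=1}^N\subset U^*$ with $\frac1\tau(u_\tau^1-u_\tau^0)+Au_\tau^1+\iota^*\xi_\tau^1=f_\tau^1$, $\xi_\tau^1\in\partial J(\iota u_\tau^1)$, and for $n=2,\dots,N$: $\frac1\tau(\frac32u_\tau^n-2u_\tau^{n-1}+\frac12u_\tau^{n-2})+Au_\tau^n+\iota^*\xi_\tau^n=f_\tau^n$, $\xi_\tau^n\in\partial J(\iota u_\tau^n)$. *)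

theory Defs
  imports "HOL-Analysis.Analysis"
begin

definition compact_op :: "('a::metric_space \<Rightarrow> 'b::metric_space) \<Rightarrow> bool" where
  "compact_op L \<longleftrightarrow> (\<forall>B. bounded B \<longrightarrow> compact (closure (L ` B)))"

definition separable_space :: "'a::metric_space itself \<Rightarrow> bool" where
  "separable_space _ \<longleftrightarrow> (\<exists>D::'a set. countable D \<and> closure D = UNIV)"

text \<open>The type 'd together with the pairing dp is (an isometric copy of) the dual
of 'v: every element gives a bounded linear functional, the norm is the
operator norm, and every bounded linear functional arises.\<close>
definition is_dual_pairing :: "('d::real_normed_vector \<Rightarrow> 'v::real_normed_vector \<Rightarrow> real) \<Rightarrow> bool" where
  "is_dual_pairing dp \<longleftrightarrow>
     (\<forall>d. bounded_linear (dp d)) \<and>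
     (\<forall>v. linear (\<lambda>d. dp d v)) \<and>
     (\<forall>d. norm d = onorm (dp d)) \<and>
     (\<forall>\<phi>. bounded_linear \<phi> \<longrightarrow> (\<exists>d. dp d = \<phi>))"

text \<open>Reflexivity of 'v expressed through its dual 'd: the canonical map into the bidual is onto.\<close>
definition reflexive_via :: "('d::real_normed_vector \<Rightarrow> 'v::real_normed_vector \<Rightarrow> real) \<Rightarrow> bool" where
  "reflexive_via dp \<longleftrightarrow> (\<forall>\<phi>::'d \<Rightarrow> real. bounded_linear \<phi> \<longrightarrow> (\<exists>v. \<forall>d. \<phi> d = dp d v))"

definition reflexive_space :: "'u::real_normed_vector itself \<Rightarrow> bool" where
  "reflexive_space _ \<longleftrightarrow>
     (\<forall>\<phi>::('u \<Rightarrow>\<^sub>L real) \<Rightarrow> real. bounded_linear \<phi> \<longrightarrow> (\<exists>u::'u. \<forall>\<xi>. \<phi> \<xi> = blinfun_apply \<xi> u))"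

definition locally_lipschitz :: "('u::metric_space \<Rightarrow> real) \<Rightarrow> bool" where
  "locally_lipschitz J \<longleftrightarrow>
     (\<forall>x. \<exists>r>0. \<exists>L. \<forall>y\<in>ball x r. \<forall>z\<in>ball x r. \<bar>J y - J z\<bar> \<le> L * dist y z)"

definition clarke_dd :: "('u::real_normed_vector \<Rightarrow> real) \<Rightarrow> 'u \<Rightarrow> 'u \<Rightarrow> ereal" where
  "clarke_dd J x v =
     Limsup (nhds x \<times>\<^sub>F at_right 0) (\<lambda>(y, l). ereal ((J (y + l *\<^sub>R v) - J y) / l))"

definition clarke_subdiff :: "('u::real_normed_vector \<Rightarrow> real) \<Rightarrow> 'u \<Rightarrow> ('u \<Rightarrow>\<^sub>L real) set" where
  "clarke_subdiff J x = {\<xi>. \<forall>v. ereal (blinfun_apply \<xi> v) \<le> clarke_dd J x v}"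

definition weak_conv :: "('d \<Rightarrow> 'v \<Rightarrow> real) \<Rightarrow> (nat \<Rightarrow> 'v) \<Rightarrow> 'v \<Rightarrow> bool" where
  "weak_conv dp vs v \<longleftrightarrow> (\<forall>d. (\<lambda>n. dp d (vs n)) \<longlonglongrightarrow> dp d v)"

definition pseudomonotone :: "('d \<Rightarrow> 'v::real_normed_vector \<Rightarrow> real) \<Rightarrow> ('v \<Rightarrow> 'd) \<Rightarrow> bool" where
  "pseudomonotone dp A \<longleftrightarrow>
     (\<forall>vs v. weak_conv dp vs v \<and> limsup (\<lambda>n. ereal (dp (A (vs n)) (vs n - v))) \<le> 0 \<longrightarrow>
        (\<forall>y. ereal (dp (A v) (v - y)) \<le> liminf (\<lambda>n. ereal (dp (A (vs n)) (vs n - y)))))"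

text \<open>Norm in V* of an element h of H (H \<subseteq> V* via v \<mapsto> (h, jV v)).\<close>
definition vstar_norm :: "('v::real_normed_vector \<Rightarrow> 'h::real_inner) \<Rightarrow> 'h \<Rightarrow> real" where
  "vstar_norm jV h = onorm (\<lambda>v. inner h (jV v))"

definition rothe_f :: "(real \<Rightarrow> 'd::{banach,second_countable_topology}) \<Rightarrow> real \<Rightarrow> nat \<Rightarrow> 'd" where
  "rothe_f f \<tau> n =
     (if n = 1 then (1 / \<tau>) *\<^sub>R set_lebesgue_integral lborel {0..\<tau>} f
      else (3 / (2 * \<tau>)) *\<^sub>R set_lebesgue_integral lborel {(real n - 1) * \<tau> .. real n * \<tau>} f
         - (1 / (2 * \<tau>)) *\<^sub>R set_lebesgue_integral lborel {(real n - 2) * \<tau> .. (real n - 1) * \<tau>} f)"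

text \<open>Problem P_tau, with the V*-valued equations written out by pairing with every test v.\<close>
definition rothe_solution ::
  "('d::{banach,second_countable_topology} \<Rightarrow> 'v::real_normed_vector \<Rightarrow> real) \<Rightarrow> ('v \<Rightarrow> 'h::real_inner) \<Rightarrow>
   ('v \<Rightarrow> 'd) \<Rightarrow> ('u::real_normed_vector \<Rightarrow> real) \<Rightarrow> ('v \<Rightarrow> 'u) \<Rightarrow> (real \<Rightarrow> 'd) \<Rightarrow> real \<Rightarrow> nat \<Rightarrow>
   (nat \<Rightarrow> 'v) \<Rightarrow> (nat \<Rightarrow> ('u \<Rightarrow>\<^sub>L real)) \<Rightarrow> bool" where
  "rothe_solution dp jV A J \<iota> f T N u \<xi> \<longleftrightarrow>
     (let \<tau> = T / real N in
      (\<forall>v. inner (jV ((1 / \<tau>) *\<^sub>R (u 1 - u 0))) (jV v) + dp (A (u 1)) v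
            + blinfun_apply (\<xi> 1) (\<iota> v) = dp (rothe_f f \<tau> 1) v) \<and>
      \<xi> 1 \<in> clarke_subdiff J (\<iota> (u 1)) \<and>
      (\<forall>n\<in>{2..N}.
        (\<forall>v. inner (jV ((1 / \<tau>) *\<^sub>R ((3/2) *\<^sub>R u n - 2 *\<^sub>R u (n - 1) + (1/2) *\<^sub>R u (n - 2)))) (jV v)
              + dp (A (u n)) v + blinfun_apply (\<xi> n) (\<iota> v) = dp (rothe_f f \<tau> n) v) \<and>
        \<xi> n \<in> clarke_subdiff J (\<iota> (u n))))"

end

theory Submission
  imports Defs
begin

(* Test the n-th equation of the scheme with u^n. By the identity
     4 (3/2 a - 2 b + 1/2 c, a) = |a|^2 + |2a - b|^2 - |b|^2 - |2b - c|^2 + |a - 2b + c|^2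
   the BDF2 quotient telescopes into the energy |u^n|^2 + |2u^n - u^(n-1)|^2 plus the
   dissipated second differences |u^n - 2u^(n-1) + u^(n-2)|^2 (the first, implicit Euler step
   is handled by 2 (a - b, a) = |a|^2 - |b|^2 + |a - b|^2). Coercivity of A controls ||u^n||^2
   up to a multiple of |u^n|^2; the linear growth of the Clarke subgradient costs |iota u^n|^2,
   which Ehrling's inequality for the compact embedding V into Z trades for a small multiple
   of ||u^n||^2 and a large multiple of |u^n|^2. What remains is a discrete Gronwall inequality
   in the energy, which closes for small tau. The bounds on xi and on the difference quotients
   in V* then follow from the growth conditions and the equation itself. *)

lemma square_add_le: "(x + y)\<^sup>2 \<le> 2 * x\<^sup>2 + 2 * y\<^sup>2" for x y :: real
proof -
  have "0 \<le> (x - y)\<^sup>2" by simp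
  then show ?thesis by (simp add: power2_eq_square algebra_simps)
qed

lemma square_add3_le: "(x + y + z)\<^sup>2 \<le> 3 * x\<^sup>2 + 3 * y\<^sup>2 + 3 * z\<^sup>2" for x y z :: real
proof -
  have "0 \<le> (x - y)\<^sup>2 + (y - z)\<^sup>2 + (x - z)\<^sup>2" by simp
  then show ?thesis by (simp add: power2_eq_square algebra_simps)
qed

lemma mult_le_young:
  fixes a b e :: real
  assumes "e > 0"
  shows "a * b \<le> a\<^sup>2 / e + e / 4 * b\<^sup>2"
proof -
  have "0 \<le> (a - e * b / 2)\<^sup>2" by simp
  with assms show ?thesis
    by (simp add: field_simps power2_eq_square)
qed

lemma sq_le_of_forall_am_gm_bound:
  fixes y G L :: real
  assumes bound: "\<And>s. s > 0 \<Longrightarrow> y \<le> G / (2 * s) + s * L / 2"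
    and "0 \<le> y" and "0 \<le> G" and "L > 0"
  shows "y\<^sup>2 \<le> L * G"
proof (cases "y = 0")
  case False
  with \<open>0 \<le> y\<close> have "y > 0" by simp
  with bound[of "y / L"] \<open>L > 0\<close> have "y \<le> G * L / (2 * y) + y / 2"
    by (simp add: field_simps)
  with \<open>y > 0\<close> show ?thesis
    by (simp add: field_simps power2_eq_square)
qed (use assms in simp)

section \<open>Ehrling's inequality\<close>

lemma compact_op_convergent_subseq:
  fixes L :: "'a::metric_space \<Rightarrow> 'b::metric_space" and x :: "nat \<Rightarrow> 'a"
  assumes "compact_op L" and "bounded (range x)"
  obtains l r where "strict_mono r" and "(\<lambda>k. L (x (r k))) \<longlonglongrightarrow> l"
proof -
  have "compact (closure (L ` range x))"
    using assms unfolding compact_op_def by blast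
  then have "seq_compact (closure (L ` range x))"
    by (rule compact_imp_seq_compact)
  moreover have "\<forall>n. L (x n) \<in> closure (L ` range x)"
    by (simp add: closure_subset[THEN subsetD])
  ultimately obtain l r where "strict_mono r" and "((\<lambda>n. L (x n)) \<circ> r) \<longlonglongrightarrow> l"
    by (rule seq_compactE) blast
  then show ?thesis
    using that by (simp add: comp_def)
qed

lemma linear_sq_bound_of_unit_sphere:
  fixes S :: "'v::real_normed_vector \<Rightarrow> 'a::real_normed_vector" and R :: "'v \<Rightarrow> 'b::real_normed_vector"
  assumes "linear S" and "linear R"
    and unit: "\<And>w. norm w = 1 \<Longrightarrow> (norm (S w))\<^sup>2 \<le> \<epsilon> + C * (norm (R w))\<^sup>2"
  shows "(norm (S v))\<^sup>2 \<le> \<epsilon> * (norm v)\<^sup>2 + C * (norm (R v))\<^sup>2"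
proof (cases "v = 0")
  case True
  then show ?thesis
    using linear_0[OF \<open>linear S\<close>] linear_0[OF \<open>linear R\<close>] by simp
next
  case False
  then have "(norm (S ((1 / norm v) *\<^sub>R v)))\<^sup>2 \<le> \<epsilon> + C * (norm (R ((1 / norm v) *\<^sub>R v)))\<^sup>2"
    by (intro unit) simp
  then have "(norm (S v))\<^sup>2 / (norm v)\<^sup>2 \<le> \<epsilon> + C * ((norm (R v))\<^sup>2 / (norm v)\<^sup>2)"
    by (simp add: linear_scale[OF \<open>linear S\<close>] linear_scale[OF \<open>linear R\<close>] power_divide)
  with False show ?thesis
    by (simp add: field_simps)
qed

lemma compact_op_subseq_tendsto_zero:
  fixes K :: "'v::real_normed_vector \<Rightarrow> 'z::real_normed_vector" and E :: "'z \<Rightarrow> 'h::real_normed_vector"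
  assumes "compact_op K" and "bounded (range w)" and "bounded_linear E" and "inj E"
    and "(\<lambda>n. E (K (w n))) \<longlonglongrightarrow> 0"
  obtains r where "strict_mono r" and "(\<lambda>k. K (w (r k))) \<longlonglongrightarrow> 0"
proof -
  interpret E: bounded_linear E by fact
  obtain l r where "strict_mono r" and l: "(\<lambda>k. K (w (r k))) \<longlonglongrightarrow> l"
    using compact_op_convergent_subseq[OF \<open>compact_op K\<close> \<open>bounded (range w)\<close>] by blast
  have "(\<lambda>k. E (K (w (r k)))) \<longlonglongrightarrow> 0"
    using LIMSEQ_subseq_LIMSEQ[OF assms(5) \<open>strict_mono r\<close>] by (simp add: comp_def)
  then have "E l = 0"
    using E.tendsto[OF l] LIMSEQ_unique by blast
  then have "l = 0"
    using \<open>inj E\<close> E.zero by (metis injD)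
  with \<open>strict_mono r\<close> l that show ?thesis
    by blast
qed

lemma ehrling_inequality_unit_sphere:
  fixes iVZ :: "'v::real_normed_vector \<Rightarrow> 'z::real_normed_vector"
    and iZH :: "'z \<Rightarrow> 'h::real_normed_vector" and \<iota>2 :: "'z \<Rightarrow> 'u::real_normed_vector"
  assumes "compact_op iVZ" and "bounded_linear iVZ"
    and "bounded_linear iZH" and "inj iZH" and "bounded_linear \<iota>2" and "\<epsilon> > 0"
  shows "\<exists>C\<ge>0. \<forall>w. norm w = 1 \<longrightarrow> (norm (\<iota>2 (iVZ w)))\<^sup>2 \<le> \<epsilon> + C * (norm (iZH (iVZ w)))\<^sup>2"
proof (rule ccontr)
  interpret I2: bounded_linear \<iota>2 by fact
  obtain B where "B > 0" and B: "\<And>v. norm (\<iota>2 (iVZ v)) \<le> norm v * B"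
    using bounded_linear.pos_bounded[OF bounded_linear_compose[OF I2.bounded_linear \<open>bounded_linear iVZ\<close>]]
    by auto
  assume "\<not> ?thesis"
  then have "\<forall>n::nat. \<exists>w. norm w = 1 \<and> \<epsilon> + (real n)\<^sup>2 * (norm (iZH (iVZ w)))\<^sup>2 < (norm (\<iota>2 (iVZ w)))\<^sup>2"
    by (metis not_le zero_le_power2)
  then obtain w where norm_w: "\<And>n. norm (w n) = 1"
    and w: "\<And>n. \<epsilon> + (real n)\<^sup>2 * (norm (iZH (iVZ (w n))))\<^sup>2 < (norm (\<iota>2 (iVZ (w n))))\<^sup>2"
    by metis
  have "(\<lambda>n. iZH (iVZ (w n))) \<longlonglongrightarrow> 0"
  proof (rule Lim_null_comparison)
    have "norm (iZH (iVZ (w n))) \<le> B / real n" if "n \<ge> 1" for n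
    proof -
      have "(real n)\<^sup>2 * (norm (iZH (iVZ (w n))))\<^sup>2 < (norm (\<iota>2 (iVZ (w n))))\<^sup>2"
        using w[of n] \<open>\<epsilon> > 0\<close> by linarith
      also have "\<dots> \<le> B\<^sup>2"
        using B[of "w n"] norm_w[of n] by (simp add: power_mono)
      finally have "real n * norm (iZH (iVZ (w n))) < B"
        using \<open>B > 0\<close> by (simp add: power_less_imp_less_base flip: power_mult_distrib)
      with that show ?thesis by (simp add: field_simps)
    qed
    then show "\<forall>\<^sub>F n in sequentially. norm (iZH (iVZ (w n))) \<le> B / real n"
      using eventually_sequentially by blast
  qed (rule lim_const_over_n)
  moreover have "bounded (range w)"
    unfolding bounded_iff using norm_w by auto
  ultimately obtain r where "(\<lambda>k. iVZ (w (r k))) \<longlonglongrightarrow> 0"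
    using compact_op_subseq_tendsto_zero[OF \<open>compact_op iVZ\<close> _ \<open>bounded_linear iZH\<close> \<open>inj iZH\<close>] by blast
  then have "(\<lambda>k. \<iota>2 (iVZ (w (r k)))) \<longlonglongrightarrow> 0"
    using I2.tendsto by fastforce
  then have "(\<lambda>k. (norm (\<iota>2 (iVZ (w (r k)))))\<^sup>2) \<longlonglongrightarrow> 0"
    using tendsto_power[OF tendsto_norm, of _ 0 sequentially 2] by simp
  then have "\<forall>\<^sub>F k in sequentially. (norm (\<iota>2 (iVZ (w (r k)))))\<^sup>2 < \<epsilon>"
    using \<open>\<epsilon> > 0\<close> by (rule order_tendstoD(2))
  then obtain k where "(norm (\<iota>2 (iVZ (w (r k)))))\<^sup>2 < \<epsilon>"
    using eventually_sequentially by auto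
  moreover have "0 \<le> (real (r k))\<^sup>2 * (norm (iZH (iVZ (w (r k)))))\<^sup>2"
    by simp
  ultimately show False
    using w[of "r k"] by linarith
qed

lemma ehrling_inequality:
  fixes iVZ :: "'v::real_normed_vector \<Rightarrow> 'z::real_normed_vector"
    and iZH :: "'z \<Rightarrow> 'h::real_normed_vector" and \<iota>2 :: "'z \<Rightarrow> 'u::real_normed_vector"
  assumes "compact_op iVZ" and "bounded_linear iVZ"
    and "bounded_linear iZH" and "inj iZH" and "bounded_linear \<iota>2" and "\<epsilon> > 0"
  shows "\<exists>C\<ge>0. \<forall>v. (norm (\<iota>2 (iVZ v)))\<^sup>2 \<le> \<epsilon> * (norm v)\<^sup>2 + C * (norm (iZH (iVZ v)))\<^sup>2"
proof -
  obtain C where "C \<ge> 0"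
    and C: "\<And>w. norm w = 1 \<Longrightarrow> (norm (\<iota>2 (iVZ w)))\<^sup>2 \<le> \<epsilon> + C * (norm (iZH (iVZ w)))\<^sup>2"
    using ehrling_inequality_unit_sphere[OF assms] by blast
  have "linear (\<lambda>v. \<iota>2 (iVZ v))" and "linear (\<lambda>v. iZH (iVZ v))"
    using bounded_linear_compose[OF \<open>bounded_linear \<iota>2\<close> \<open>bounded_linear iVZ\<close>]
      bounded_linear_compose[OF \<open>bounded_linear iZH\<close> \<open>bounded_linear iVZ\<close>]
    by (simp_all add: bounded_linear.linear)
  then show ?thesis
    using linear_sq_bound_of_unit_sphere[of _ _ \<epsilon> C] C \<open>C \<ge> 0\<close> by blast
qed

section \<open>The averaged right-hand sides\<close>

lemma norm_set_integral_Icc_sq_le: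
  fixes f :: "real \<Rightarrow> 'a::{banach,second_countable_topology}"
  assumes "a < b" and f2: "set_integrable lborel {a..b} (\<lambda>t. (norm (f t))\<^sup>2)"
  shows "(norm (LINT t:{a..b}|lborel. f t))\<^sup>2 \<le> (b - a) * (LINT t:{a..b}|lborel. (norm (f t))\<^sup>2)"
proof (rule sq_le_of_forall_am_gm_bound)
  let ?I = "indicator {a..b} :: real \<Rightarrow> real"
  have int_I: "integrable lborel ?I"
    using \<open>a < b\<close> by (intro integrable_real_indicator) (auto simp: emeasure_lborel_Icc_eq)
  have int_f2: "integrable lborel (\<lambda>t. ?I t * (norm (f t))\<^sup>2)"
    using f2 by (simp add: set_integrable_def)
  show "0 \<le> (LINT t:{a..b}|lborel. (norm (f t))\<^sup>2)"
    unfolding set_lebesgue_integral_def by (rule integral_nonneg_AE) simp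
  show "0 \<le> norm (LINT t:{a..b}|lborel. f t)" by simp
  show "b - a > 0" using \<open>a < b\<close> by simp
  fix s :: real
  assume "s > 0"
  have am_gm: "norm (f t) \<le> (norm (f t))\<^sup>2 / (2 * s) + s / 2" for t
    using mult_le_young[of "2 * s" "norm (f t)" 1] \<open>s > 0\<close> by simp
  have "norm (LINT t:{a..b}|lborel. f t) \<le> (LINT t|lborel. ?I t * norm (f t))"
    unfolding set_lebesgue_integral_def
    using integral_norm_bound[of lborel "\<lambda>t. ?I t *\<^sub>R f t"] by (simp add: abs_mult)
  also have "\<dots> \<le> (LINT t|lborel. ?I t * (norm (f t))\<^sup>2 / (2 * s) + ?I t * (s / 2))"
    using \<open>s > 0\<close> am_gm
    by (intro integral_mono' Bochner_Integration.integrable_add Bochner_Integration.integrable_divide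
        Bochner_Integration.integrable_mult_left int_I int_f2) (auto simp: indicator_def)
  also have "\<dots> = (LINT t:{a..b}|lborel. (norm (f t))\<^sup>2) / (2 * s) + s * (b - a) / 2"
    using int_I int_f2 \<open>a < b\<close>
    by (simp add: set_lebesgue_integral_def integral_indicator)
  finally show "norm (LINT t:{a..b}|lborel. f t)
      \<le> (LINT t:{a..b}|lborel. (norm (f t))\<^sup>2) / (2 * s) + s * (b - a) / 2" .
qed

lemma set_integral_consecutive_intervals:
  fixes g :: "real \<Rightarrow> 'a::{banach,second_countable_topology}"
  assumes "set_integrable lborel {0..real N * \<tau>} g" and "\<tau> \<ge> 0"
  shows "(\<Sum>n=1..N. LINT t:{(real n - 1) * \<tau>..real n * \<tau>}|lborel. g t)
           = (LINT t:{0..real N * \<tau>}|lborel. g t)"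
  using assms(1)
proof (induction N)
  case 0
  have "(LINT t:{0}|lborel. g t) = 0"
    unfolding set_lebesgue_integral_def
    by (rule integral_eq_zero_AE) (use AE_lborel_singleton[of 0] in eventually_elim, simp)
  then show ?case by simp
next
  case (Suc N)
  have split: "{0..real (Suc N) * \<tau>} = {0..real N * \<tau>} \<union> {real N * \<tau>..real (Suc N) * \<tau>}"
    using \<open>\<tau> \<ge> 0\<close> by (intro ivl_disj_un_two_touch(4)[symmetric]) (auto intro: mult_right_mono)
  have int_Un: "set_integrable lborel ({0..real N * \<tau>} \<union> {real N * \<tau>..real (Suc N) * \<tau>}) g"
    using Suc.prems by (simp only: split)
  have "set_integrable lborel {0..real N * \<tau>} g"
    and "set_integrable lborel {real N * \<tau>..real (Suc N) * \<tau>} g"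
    by (auto intro: set_integrable_subset[OF int_Un])
  moreover have "AE t in lborel. \<not> (t \<in> {0..real N * \<tau>} \<and> t \<in> {real N * \<tau>..real (Suc N) * \<tau>})"
    using AE_lborel_singleton[of "real N * \<tau>"] by eventually_elim auto
  ultimately show ?case
    using Suc.IH by (simp only: split set_integral_Un_AE sets_lborel atLeastAtMost_borel)
      (simp add: algebra_simps)
qed

lemma norm_rothe_f_first_sq_le:
  fixes f :: "real \<Rightarrow> 'a::{banach,second_countable_topology}"
  assumes "\<tau> > 0" and "set_integrable lborel {0..\<tau>} (\<lambda>t. (norm (f t))\<^sup>2)"
  shows "\<tau> * (norm (rothe_f f \<tau> 1))\<^sup>2 \<le> (LINT t:{0..\<tau>}|lborel. (norm (f t))\<^sup>2)"
proof -
  have "\<tau> * (norm (rothe_f f \<tau> 1))\<^sup>2 = (norm (LINT t:{0..\<tau>}|lborel. f t))\<^sup>2 / \<tau>"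
    using \<open>\<tau> > 0\<close> by (simp add: rothe_f_def power2_eq_square)
  also have "\<dots> \<le> (LINT t:{0..\<tau>}|lborel. (norm (f t))\<^sup>2)"
    using norm_set_integral_Icc_sq_le[of 0 \<tau> f] assms by (simp add: pos_divide_le_eq mult.commute)
  finally show ?thesis .
qed

lemma norm_rothe_f_sq_le:
  fixes f :: "real \<Rightarrow> 'a::{banach,second_countable_topology}"
  assumes "\<tau> > 0" and "n \<ge> 2"
    and f2: "set_integrable lborel {(real n - 2) * \<tau>..real n * \<tau>} (\<lambda>t. (norm (f t))\<^sup>2)"
  shows "\<tau> * (norm (rothe_f f \<tau> n))\<^sup>2
           \<le> 9/2 * (LINT t:{(real n - 1) * \<tau>..real n * \<tau>}|lborel. (norm (f t))\<^sup>2)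
             + 1/2 * (LINT t:{(real n - 2) * \<tau>..(real n - 1) * \<tau>}|lborel. (norm (f t))\<^sup>2)"
    (is "_ \<le> 9/2 * ?G1 + 1/2 * ?G2")
proof -
  let ?P1 = "LINT t:{(real n - 1) * \<tau>..real n * \<tau>}|lborel. f t"
  let ?P2 = "LINT t:{(real n - 2) * \<tau>..(real n - 1) * \<tau>}|lborel. f t"
  have "(norm ?P1)\<^sup>2 \<le> \<tau> * ?G1" and "(norm ?P2)\<^sup>2 \<le> \<tau> * ?G2"
    using norm_set_integral_Icc_sq_le[of "(real n - 1) * \<tau>" "real n * \<tau>" f]
      norm_set_integral_Icc_sq_le[of "(real n - 2) * \<tau>" "(real n - 1) * \<tau>" f]
      set_integrable_subset[OF f2] \<open>\<tau> > 0\<close>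
    by (auto simp: algebra_simps)
  have "norm (rothe_f f \<tau> n) \<le> 3 / (2 * \<tau>) * norm ?P1 + 1 / (2 * \<tau>) * norm ?P2"
    using \<open>n \<ge> 2\<close> \<open>\<tau> > 0\<close> norm_triangle_ineq4[of "(3 / (2 * \<tau>)) *\<^sub>R ?P1" "(1 / (2 * \<tau>)) *\<^sub>R ?P2"]
    by (simp add: rothe_f_def)
  then have "(norm (rothe_f f \<tau> n))\<^sup>2 \<le> (3 / (2 * \<tau>) * norm ?P1 + 1 / (2 * \<tau>) * norm ?P2)\<^sup>2"
    by (simp add: power_mono)
  also have "\<dots> \<le> 2 * ((3 / (2 * \<tau>))\<^sup>2 * (norm ?P1)\<^sup>2) + 2 * ((1 / (2 * \<tau>))\<^sup>2 * (norm ?P2)\<^sup>2)"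
    using square_add_le[of "3 / (2 * \<tau>) * norm ?P1" "1 / (2 * \<tau>) * norm ?P2"]
    by (simp only: power_mult_distrib)
  also have "\<dots> \<le> 2 * ((3 / (2 * \<tau>))\<^sup>2 * (\<tau> * ?G1)) + 2 * ((1 / (2 * \<tau>))\<^sup>2 * (\<tau> * ?G2))"
    using \<open>(norm ?P1)\<^sup>2 \<le> \<tau> * ?G1\<close> \<open>(norm ?P2)\<^sup>2 \<le> \<tau> * ?G2\<close> by (intro add_mono mult_left_mono) auto
  also have "\<dots> = (9/2 * ?G1 + 1/2 * ?G2) / \<tau>"
    using \<open>\<tau> > 0\<close> by (simp add: power2_eq_square field_simps)
  finally show ?thesis
    using \<open>\<tau> > 0\<close> by (simp add: field_simps)
qed

lemma sum_consecutive_weights_le: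
  fixes G :: "nat \<Rightarrow> real"
  assumes G_nonneg: "\<And>n. 0 \<le> G n" and "N \<ge> 1"
  shows "G 1 + (\<Sum>n=2..N. 9/2 * G n + 1/2 * G (n - 1)) \<le> 5 * (\<Sum>n=1..N. G n)"
proof -
  have "(\<Sum>n=2..N. G (n - 1)) = (\<Sum>n=1..N-1. G n)"
    using \<open>N \<ge> 1\<close> sum.shift_bounds_cl_Suc_ivl[of "\<lambda>n. G (n - 1)" 1 "N - 1"]
    by (simp add: numeral_2_eq_2)
  also have "\<dots> \<le> (\<Sum>n=1..N. G n)"
    using G_nonneg by (intro sum_mono2) auto
  finally have "(\<Sum>n=2..N. G (n - 1)) \<le> (\<Sum>n=1..N. G n)" .
  moreover have "(\<Sum>n=1..N. G n) = G 1 + (\<Sum>n=2..N. G n)"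
    using \<open>N \<ge> 1\<close> sum.atLeast_Suc_atMost[of 1 N G] by (simp add: numeral_2_eq_2)
  moreover have "(\<Sum>n=2..N. 9/2 * G n + 1/2 * G (n - 1)) = 9/2 * (\<Sum>n=2..N. G n) + 1/2 * (\<Sum>n=2..N. G (n - 1))"
    by (simp add: sum.distrib sum_distrib_left)
  ultimately show ?thesis
    using G_nonneg[of 1] by linarith
qed

lemma rothe_f_sum_sq_le:
  fixes f :: "real \<Rightarrow> 'a::{banach,second_countable_topology}"
  assumes "T > 0" and "N \<ge> 1" and f2: "set_integrable lborel {0..T} (\<lambda>t. (norm (f t))\<^sup>2)"
  shows "T / real N * (\<Sum>n=1..N. (norm (rothe_f f (T / real N) n))\<^sup>2)
           \<le> 5 * (LINT t:{0..T}|lborel. (norm (f t))\<^sup>2)"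
proof -
  define \<tau> where "\<tau> = T / real N"
  have "\<tau> > 0" and T_eq: "T = real N * \<tau>"
    using assms by (auto simp: \<tau>_def)
  define G where "G n = (LINT t:{(real n - 1) * \<tau>..real n * \<tau>}|lborel. (norm (f t))\<^sup>2)" for n
  have G_nonneg: "0 \<le> G n" for n
    unfolding G_def set_lebesgue_integral_def by (rule integral_nonneg_AE) simp
  have f2_sub: "set_integrable lborel {(real n - k) * \<tau>..real n * \<tau>} (\<lambda>t. (norm (f t))\<^sup>2)"
    if "k \<le> real n" and "n \<le> N" for n k
    using that \<open>\<tau> > 0\<close>
    by (intro set_integrable_subset[OF f2]) (auto simp: T_eq intro: order_trans mult_right_mono)
  have first: "\<tau> * (norm (rothe_f f \<tau> 1))\<^sup>2 \<le> G 1"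
    using norm_rothe_f_first_sq_le[OF \<open>\<tau> > 0\<close>] f2_sub[of 1 1] \<open>N \<ge> 1\<close> by (simp add: G_def)
  have later: "\<tau> * (norm (rothe_f f \<tau> n))\<^sup>2 \<le> 9/2 * G n + 1/2 * G (n - 1)" if "n \<in> {2..N}" for n
    using norm_rothe_f_sq_le[OF \<open>\<tau> > 0\<close>, of n f] f2_sub[of 2 n] that
    by (simp add: G_def of_nat_diff algebra_simps)
  have "\<tau> * (\<Sum>n=1..N. (norm (rothe_f f \<tau> n))\<^sup>2)
      = \<tau> * (norm (rothe_f f \<tau> 1))\<^sup>2 + (\<Sum>n=2..N. \<tau> * (norm (rothe_f f \<tau> n))\<^sup>2)"
    using \<open>N \<ge> 1\<close> sum.atLeast_Suc_atMost[of 1 N "\<lambda>n. (norm (rothe_f f \<tau> n))\<^sup>2"]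
    by (simp add: distrib_left sum_distrib_left numeral_2_eq_2)
  also have "\<dots> \<le> G 1 + (\<Sum>n=2..N. 9/2 * G n + 1/2 * G (n - 1))"
    using first later by (intro add_mono sum_mono) auto
  also have "\<dots> \<le> 5 * (\<Sum>n=1..N. G n)"
    using G_nonneg \<open>N \<ge> 1\<close> by (rule sum_consecutive_weights_le)
  also have "(\<Sum>n=1..N. G n) = (LINT t:{0..T}|lborel. (norm (f t))\<^sup>2)"
    unfolding G_def T_eq using f2 \<open>\<tau> > 0\<close> T_eq
    by (intro set_integral_consecutive_intervals) auto
  finally show ?thesis
    by (simp add: \<tau>_def)
qed

section \<open>Energy estimate for the BDF2 scheme in a Hilbert space\<close>

lemma inner_euler_identity:
  fixes a b :: "'a::real_inner"
  shows "2 * inner (a - b) a = (norm a)\<^sup>2 - (norm b)\<^sup>2 + (norm (a - b))\<^sup>2"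
  by (simp add: power2_norm_eq_inner inner_diff_left inner_diff_right inner_commute algebra_simps)

lemma inner_bdf2_identity:
  fixes a b c :: "'a::real_inner"
  shows "4 * inner ((3/2) *\<^sub>R a - 2 *\<^sub>R b + (1/2) *\<^sub>R c) a
           = ((norm a)\<^sup>2 + (norm (2 *\<^sub>R a - b))\<^sup>2) - ((norm b)\<^sup>2 + (norm (2 *\<^sub>R b - c))\<^sup>2)
             + (norm (a - 2 *\<^sub>R b + c))\<^sup>2"
  by (simp add: power2_norm_eq_inner inner_diff_left inner_diff_right inner_add_left
      inner_add_right inner_commute algebra_simps)

lemma discrete_gronwall:
  fixes Q F :: "nat \<Rightarrow> real"
  assumes "1 \<le> r" and step: "\<And>m. 2 \<le> m \<Longrightarrow> m \<le> N \<Longrightarrow> Q m \<le> r * (Q (m - 1) + F m)"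
    and F_nonneg: "\<And>m. 0 \<le> F m" and "1 \<le> m" and "m \<le> N"
  shows "Q m \<le> r ^ (m - 1) * (Q 1 + (\<Sum>n=2..m. F n))"
  using \<open>1 \<le> m\<close> \<open>m \<le> N\<close>
proof (induction m rule: nat_induct_at_least)
  case base
  then show ?case by simp
next
  case (Suc m)
  have "1 \<le> r ^ (m - 1)"
    using \<open>1 \<le> r\<close> by (rule one_le_power)
  then have "F (Suc m) \<le> r ^ (m - 1) * F (Suc m)"
    using mult_right_mono[OF _ F_nonneg] by fastforce
  with Suc have "Q m + F (Suc m) \<le> r ^ (m - 1) * (Q 1 + (\<Sum>n=2..m. F n)) + r ^ (m - 1) * F (Suc m)"
    by (intro add_mono) auto
  with \<open>1 \<le> r\<close> have "r * (Q m + F (Suc m))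
      \<le> r * (r ^ (m - 1) * (Q 1 + (\<Sum>n=2..m. F n)) + r ^ (m - 1) * F (Suc m))"
    by (intro mult_left_mono) auto
  with step[of "Suc m"] Suc have "Q (Suc m) \<le> \<dots>"
    by simp
  also have "\<dots> = r ^ m * (Q 1 + (\<Sum>n=2..Suc m. F n))"
    using Suc by (simp add: algebra_simps power_eq_if)
  finally show ?case by simp
qed

lemma power_inverse_one_minus_le_exp:
  fixes \<gamma> :: real
  assumes "0 \<le> \<gamma>" and "\<gamma> \<le> 1/2" and "k \<le> N"
  shows "(1 / (1 - \<gamma>)) ^ k \<le> exp (2 * \<gamma> * real N)"
proof -
  have "\<gamma> * (2 * \<gamma>) \<le> \<gamma> * 1"
    using assms by (intro mult_left_mono) auto
  then have "1 / (1 - \<gamma>) \<le> 1 + 2 * \<gamma>"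
    using assms by (simp add: field_simps)
  also have "\<dots> \<le> exp (2 * \<gamma>)"
    by (rule exp_ge_add_one_self)
  finally have "(1 / (1 - \<gamma>)) ^ k \<le> exp (2 * \<gamma>) ^ k"
    using assms by (intro power_mono) auto
  also have "\<dots> \<le> exp (2 * \<gamma>) ^ N"
    using assms by (intro power_increasing) auto
  also have "\<dots> = exp (2 * \<gamma> * real N)"
    by (simp add: exp_of_nat_mult[symmetric] mult.commute)
  finally show ?thesis .
qed

locale bdf2_energy_inequality =
  fixes h :: "nat \<Rightarrow> 'a::real_inner" and p F :: "nat \<Rightarrow> real" and \<tau> K :: real and N :: nat
  assumes tau_pos: "\<tau> > 0" and K_nonneg: "K \<ge> 0" and tau_small: "8 * K * \<tau> \<le> 1"
    and N_pos: "N \<ge> 1"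
    and p_nonneg: "\<And>n. 0 \<le> p n" and F_nonneg: "\<And>n. 0 \<le> F n"
    and first_step: "inner (h 1 - h 0) (h 1) + \<tau> * p 1 \<le> \<tau> * F 1 + \<tau> * K * (norm (h 1))\<^sup>2"
    and bdf2_step: "\<And>n. n \<in> {2..N} \<Longrightarrow>
      inner ((3/2) *\<^sub>R h n - 2 *\<^sub>R h (n - 1) + (1/2) *\<^sub>R h (n - 2)) (h n) + \<tau> * p n
        \<le> \<tau> * F n + \<tau> * K * (norm (h n))\<^sup>2"
begin

definition energy :: "nat \<Rightarrow> real" where
  "energy n = (norm (h n))\<^sup>2 + (norm (2 *\<^sub>R h n - h (n - 1)))\<^sup>2"

definition dissipation :: "nat \<Rightarrow> real" where
  "dissipation n = (norm (h n - 2 *\<^sub>R h (n - 1) + h (n - 2)))\<^sup>2 + 4 * \<tau> * p n"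

definition total_energy :: "nat \<Rightarrow> real" where
  "total_energy m = energy m + (\<Sum>n=2..m. dissipation n)"

definition energy_bound :: real where
  "energy_bound = exp (8 * K * real N * \<tau>) * (4 * (norm (h 0))\<^sup>2 + 8 * \<tau> * (\<Sum>n=1..N. F n))"

lemma dissipation_nonneg: "0 \<le> dissipation n"
  using tau_pos p_nonneg[of n] by (simp add: dissipation_def)

lemma norm_sq_le_total_energy: "(norm (h m))\<^sup>2 \<le> total_energy m"
  using dissipation_nonneg by (simp add: total_energy_def energy_def sum_nonneg add_increasing2)

lemma first_step_bound:
  "(3/4) * (norm (h 1))\<^sup>2 + (norm (h 1 - h 0))\<^sup>2 + 2 * (\<tau> * p 1) \<le> (norm (h 0))\<^sup>2 + 2 * (\<tau> * F 1)"
proof -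
  have "2 * \<tau> * K * (norm (h 1))\<^sup>2 \<le> (1/4) * (norm (h 1))\<^sup>2"
    using tau_small by (intro mult_right_mono) (auto simp: ac_simps)
  then show ?thesis
    using first_step inner_euler_identity[of "h 1" "h 0"] by (simp add: algebra_simps)
qed

lemma energy_first_le: "energy 1 \<le> 4 * (norm (h 0))\<^sup>2 + 8 * (\<tau> * F 1)"
proof -
  have "norm (2 *\<^sub>R h 1 - h 0) \<le> norm (h 1) + norm (h 1 - h 0)"
    using norm_triangle_ineq[of "h 1" "h 1 - h 0"] by (simp add: scaleR_2 algebra_simps)
  then have "(norm (2 *\<^sub>R h 1 - h 0))\<^sup>2 \<le> (norm (h 1) + norm (h 1 - h 0))\<^sup>2"
    by (intro power_mono) auto
  also have "\<dots> \<le> 2 * (norm (h 1))\<^sup>2 + 2 * (norm (h 1 - h 0))\<^sup>2"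
    by (rule square_add_le)
  finally have "(norm (2 *\<^sub>R h 1 - h 0))\<^sup>2 \<le> 2 * (norm (h 1))\<^sup>2 + 2 * (norm (h 1 - h 0))\<^sup>2" .
  moreover have "0 \<le> \<tau> * p 1"
    using tau_pos p_nonneg[of 1] by simp
  ultimately show ?thesis
    using first_step_bound zero_le_power2[of "norm (h 1 - h 0)"] unfolding energy_def diff_self_eq_0
    by linarith
qed

lemma total_energy_step:
  assumes "m \<in> {2..N}"
  shows "total_energy m \<le> 1 / (1 - 4 * \<tau> * K) * (total_energy (m - 1) + 4 * \<tau> * F m)"
proof -
  have "4 * inner ((3/2) *\<^sub>R h m - 2 *\<^sub>R h (m - 1) + (1/2) *\<^sub>R h (m - 2)) (h m)
      = energy m - energy (m - 1) + (norm (h m - 2 *\<^sub>R h (m - 1) + h (m - 2)))\<^sup>2"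
    using inner_bdf2_identity[of "h m" "h (m - 1)" "h (m - 2)"] by (simp add: energy_def numeral_2_eq_2)
  then have "energy m - energy (m - 1) + dissipation m \<le> 4 * \<tau> * F m + 4 * \<tau> * K * (norm (h m))\<^sup>2"
    using bdf2_step[OF assms] by (simp add: dissipation_def algebra_simps)
  moreover have "total_energy m = total_energy (m - 1) + (energy m - energy (m - 1)) + dissipation m"
    using assms by (cases m) (auto simp: total_energy_def)
  moreover have "4 * \<tau> * K * (norm (h m))\<^sup>2 \<le> 4 * \<tau> * K * total_energy m"
    using norm_sq_le_total_energy tau_pos K_nonneg by (intro mult_left_mono) auto
  ultimately have "(1 - 4 * \<tau> * K) * total_energy m \<le> total_energy (m - 1) + 4 * \<tau> * F m"
    by (simp add: algebra_simps)
  moreover have "1 - 4 * \<tau> * K > 0"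
    using tau_small by (simp add: ac_simps)
  ultimately show ?thesis
    by (simp add: field_simps)
qed

lemma total_energy_first_plus_data_le:
  assumes "m \<le> N"
  shows "total_energy 1 + (\<Sum>n=2..m. 4 * \<tau> * F n) \<le> 4 * (norm (h 0))\<^sup>2 + 8 * \<tau> * (\<Sum>n=1..N. F n)"
proof -
  have "(\<Sum>n=2..m. F n) \<le> (\<Sum>n=2..N. F n)"
    using assms F_nonneg by (intro sum_mono2) auto
  moreover have "(\<Sum>n=1..N. F n) = F 1 + (\<Sum>n=2..N. F n)"
    using N_pos sum.atLeast_Suc_atMost[of 1 N F] by (simp add: numeral_2_eq_2)
  ultimately have "\<tau> * (\<Sum>n=2..m. F n) \<le> \<tau> * (\<Sum>n=1..N. F n) - \<tau> * F 1"
    using tau_pos by (simp add: algebra_simps)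
  moreover have "0 \<le> \<tau> * F 1" "0 \<le> \<tau> * (\<Sum>n=2..m. F n)"
    using tau_pos F_nonneg by (auto intro!: mult_nonneg_nonneg sum_nonneg)
  ultimately show ?thesis
    using energy_first_le by (simp add: total_energy_def sum_distrib_left[symmetric])
qed

lemma total_energy_le:
  assumes "1 \<le> m" and "m \<le> N"
  shows "total_energy m \<le> energy_bound"
proof -
  let ?\<gamma> = "4 * \<tau> * K"
  have \<gamma>: "0 \<le> ?\<gamma>" "?\<gamma> \<le> 1/2"
    using tau_pos K_nonneg tau_small by (auto simp: ac_simps)
  have "total_energy m \<le> (1 / (1 - ?\<gamma>)) ^ (m - 1) * (total_energy 1 + (\<Sum>n=2..m. 4 * \<tau> * F n))"
    using \<gamma> tau_pos F_nonneg assms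
    by (intro discrete_gronwall[where N = N] total_energy_step) auto
  also have "\<dots> \<le> exp (8 * K * real N * \<tau>) * (4 * (norm (h 0))\<^sup>2 + 8 * \<tau> * (\<Sum>n=1..N. F n))"
  proof (rule mult_mono)
    show "(1 / (1 - ?\<gamma>)) ^ (m - 1) \<le> exp (8 * K * real N * \<tau>)"
      using power_inverse_one_minus_le_exp[OF \<gamma>, of "m - 1" N] assms by (simp add: algebra_simps)
    have "0 \<le> total_energy 1"
      using norm_sq_le_total_energy[of 1] by (rule order_trans[OF zero_le_power2])
    then show "0 \<le> total_energy 1 + (\<Sum>n=2..m. 4 * \<tau> * F n)"
      using tau_pos F_nonneg by (intro add_nonneg_nonneg sum_nonneg) auto
  qed (use total_energy_first_plus_data_le[OF \<open>m \<le> N\<close>] in simp_all)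
  finally show ?thesis
    unfolding energy_bound_def .
qed

lemma energy_bound_ge: "4 * (norm (h 0))\<^sup>2 + 8 * (\<tau> * (\<Sum>n=1..N. F n)) \<le> energy_bound"
proof -
  have "1 \<le> exp (8 * K * real N * \<tau>)"
    using tau_pos K_nonneg by simp
  moreover have "0 \<le> 4 * (norm (h 0))\<^sup>2 + 8 * (\<tau> * (\<Sum>n=1..N. F n))"
    using tau_pos F_nonneg by (simp add: sum_nonneg)
  ultimately have "1 * (4 * (norm (h 0))\<^sup>2 + 8 * (\<tau> * (\<Sum>n=1..N. F n)))
      \<le> exp (8 * K * real N * \<tau>) * (4 * (norm (h 0))\<^sup>2 + 8 * (\<tau> * (\<Sum>n=1..N. F n)))"
    by (rule mult_right_mono)
  then show ?thesis
    by (simp add: energy_bound_def ac_simps)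
qed

lemma sum_dissipation_le: "(\<Sum>n=2..N. dissipation n) \<le> energy_bound"
proof -
  have "0 \<le> energy N"
    by (simp add: energy_def)
  then show ?thesis
    using total_energy_le[OF N_pos order_refl] by (simp add: total_energy_def)
qed

lemma norm_sq_le_energy_bound:
  assumes "n \<le> N"
  shows "(norm (h n))\<^sup>2 \<le> energy_bound"
proof (cases "n = 0")
  case True
  have "0 \<le> \<tau> * (\<Sum>n=1..N. F n)"
    using tau_pos F_nonneg by (simp add: sum_nonneg)
  then show ?thesis
    unfolding True using energy_bound_ge zero_le_power2[of "norm (h 0)"] by linarith
next
  case False
  with assms show ?thesis
    using norm_sq_le_total_energy[of n] total_energy_le[of n] by simp
qed

lemma sum_second_difference_le:
  "(\<Sum>n=2..N. (norm (h n - 2 *\<^sub>R h (n - 1) + h (n - 2)))\<^sup>2) \<le> energy_bound"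
proof -
  have "(\<Sum>n=2..N. (norm (h n - 2 *\<^sub>R h (n - 1) + h (n - 2)))\<^sup>2) \<le> (\<Sum>n=2..N. dissipation n)"
    using tau_pos p_nonneg by (intro sum_mono) (simp add: dissipation_def)
  with sum_dissipation_le show ?thesis
    by linarith
qed

lemma sum_p_le: "\<tau> * (\<Sum>n=1..N. p n) \<le> energy_bound"
proof -
  have "4 * (\<tau> * (\<Sum>n=2..N. p n)) \<le> (\<Sum>n=2..N. dissipation n)"
    unfolding sum_distrib_left dissipation_def by (intro sum_mono) (simp add: algebra_simps)
  moreover have "\<tau> * F 1 \<le> \<tau> * (\<Sum>n=1..N. F n)"
    using tau_pos F_nonneg N_pos by (intro mult_left_mono member_le_sum) auto
  moreover have "0 \<le> \<tau> * (\<Sum>n=1..N. F n)"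
    using tau_pos F_nonneg by (simp add: sum_nonneg)
  moreover have "\<tau> * (\<Sum>n=1..N. p n) = \<tau> * p 1 + \<tau> * (\<Sum>n=2..N. p n)"
    using N_pos sum.atLeast_Suc_atMost[of 1 N p] by (simp add: numeral_2_eq_2 distrib_left)
  ultimately show ?thesis
    using first_step_bound energy_bound_ge sum_dissipation_le
      zero_le_power2[of "norm (h 0)"] zero_le_power2[of "norm (h 1)"] zero_le_power2[of "norm (h 1 - h 0)"]
    by linarith
qed

end

section \<open>A priori estimates for the Rothe scheme\<close>

lemma dual_pairing_bound:
  assumes "is_dual_pairing dp"
  shows "\<bar>dp e v\<bar> \<le> norm e * norm v"
  using assms onorm unfolding is_dual_pairing_def by (metis real_norm_def)

lemma vstar_norm_le:
  assumes "bounded_linear jV" and "0 \<le> B" and "\<And>v. \<bar>inner y (jV v)\<bar> \<le> B * norm v"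
  shows "vstar_norm jV y \<le> B"
  unfolding vstar_norm_def using assms by (intro onorm_bound) auto

definition bdf2_quotient :: "real \<Rightarrow> (nat \<Rightarrow> 'v::real_vector) \<Rightarrow> nat \<Rightarrow> 'v" where
  "bdf2_quotient \<tau> u n = (1 / \<tau>) *\<^sub>R
     (if n = 1 then u 1 - u 0 else (3/2) *\<^sub>R u n - 2 *\<^sub>R u (n - 1) + (1/2) *\<^sub>R u (n - 2))"

lemma rothe_solutionD:
  assumes "rothe_solution dp jV A J \<iota> f T N u \<xi>" and "n \<in> {1..N}"
  shows "inner (jV (bdf2_quotient (T / real N) u n)) (jV v) + dp (A (u n)) v + blinfun_apply (\<xi> n) (\<iota> v)
           = dp (rothe_f f (T / real N) n) v"
    and "\<xi> n \<in> clarke_subdiff J (\<iota> (u n))"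
  using assms by (cases "n = 1"; auto simp: rothe_solution_def bdf2_quotient_def Let_def)+

lemma energy_estimate_of_tested_equation:
  fixes dp :: "'d::real_normed_vector \<Rightarrow> 'v::real_normed_vector \<Rightarrow> real"
    and jV :: "'v \<Rightarrow> 'h::real_normed_vector" and \<iota> :: "'v \<Rightarrow> 'u::real_normed_vector"
  assumes dp_bound: "\<And>e v. \<bar>dp e v\<bar> \<le> norm e * norm v"
    and coercive: "dp (A x) x \<ge> \<alpha> * (norm x)\<^sup>2 - \<beta> * (norm (jV x))\<^sup>2"
    and subgradient: "norm \<xi> \<le> d * (1 + norm (\<iota> x))"
    and ehrling: "(norm (\<iota> x))\<^sup>2 \<le> \<alpha> / (8 * d) * (norm x)\<^sup>2 + C * (norm (jV x))\<^sup>2"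
    and tested: "y + dp (A x) x + blinfun_apply \<xi> (\<iota> x) = dp g x"
    and "\<alpha> > 0" and "d > 0"
  shows "y + \<alpha> / 2 * (norm x)\<^sup>2 \<le> (norm g)\<^sup>2 / \<alpha> + d / 4 + (\<beta> + 2 * d * C) * (norm (jV x))\<^sup>2"
proof -
  let ?t = "norm (\<iota> x)"
  have "dp g x \<le> (norm g)\<^sup>2 / \<alpha> + \<alpha> / 4 * (norm x)\<^sup>2"
    using dp_bound[of g x] mult_le_young[OF \<open>\<alpha> > 0\<close>, of "norm g" "norm x"] by linarith
  moreover have "- blinfun_apply \<xi> (\<iota> x) \<le> d / 4 + \<alpha> / 4 * (norm x)\<^sup>2 + 2 * d * C * (norm (jV x))\<^sup>2"
  proof -
    have "- blinfun_apply \<xi> (\<iota> x) \<le> norm \<xi> * ?t"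
      using norm_blinfun[of \<xi> "\<iota> x"] by simp
    also have "\<dots> \<le> d * (?t + ?t\<^sup>2)"
      using mult_right_mono[OF subgradient norm_ge_zero[of "\<iota> x"]]
      by (simp add: power2_eq_square algebra_simps)
    also have "\<dots> \<le> d * (1 / 4 + 2 * ?t\<^sup>2)"
      using mult_le_young[of 4 1 ?t] \<open>d > 0\<close> by (intro mult_left_mono) auto
    also have "\<dots> = d / 4 + 2 * d * ?t\<^sup>2"
      by (simp add: algebra_simps)
    also have "\<dots> \<le> d / 4 + 2 * d * (\<alpha> / (8 * d) * (norm x)\<^sup>2 + C * (norm (jV x))\<^sup>2)"
      using ehrling \<open>d > 0\<close> by (intro add_left_mono mult_left_mono) auto
    also have "\<dots> = d / 4 + \<alpha> / 4 * (norm x)\<^sup>2 + 2 * d * C * (norm (jV x))\<^sup>2"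
      using \<open>d > 0\<close> by (simp add: field_simps)
    finally show ?thesis .
  qed
  ultimately show ?thesis
    using tested coercive by (simp add: algebra_simps)
qed

lemma vstar_norm_sq_le_of_equation:
  fixes dp :: "'d::real_normed_vector \<Rightarrow> 'v::real_normed_vector \<Rightarrow> real"
    and jV :: "'v \<Rightarrow> 'h::real_inner" and \<iota> :: "'v \<Rightarrow> 'u::real_normed_vector"
  assumes dp_bound: "\<And>e v. \<bar>dp e v\<bar> \<le> norm e * norm v" and "bounded_linear jV"
    and A_bound: "norm (A x) \<le> a + b * norm x" and "0 \<le> a" and "0 \<le> b"
    and \<iota>_bound: "\<And>v. norm (\<iota> v) \<le> k * norm v" and "0 \<le> k"
    and subgradient: "norm \<xi> \<le> d * (1 + norm (\<iota> x))" and "0 \<le> d"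
    and equation: "\<And>v. inner y (jV v) + dp (A x) v + blinfun_apply \<xi> (\<iota> v) = dp g v"
  shows "(vstar_norm jV y)\<^sup>2 \<le> 3 * (norm g)\<^sup>2 + 3 * (a + k * d)\<^sup>2 + 3 * ((b + k\<^sup>2 * d) * norm x)\<^sup>2"
proof -
  define B where "B = norm g + (a + k * d) + (b + k\<^sup>2 * d) * norm x"
  have "0 \<le> B"
    using assms by (simp add: B_def)
  have \<xi>_bound: "norm \<xi> \<le> d * (1 + k * norm x)"
    using \<iota>_bound[of x] \<open>0 \<le> d\<close> by (intro order_trans[OF subgradient] mult_left_mono add_left_mono)
  have "\<bar>inner y (jV v)\<bar> \<le> B * norm v" for v
  proof -
    have "\<bar>dp (A x) v\<bar> \<le> (a + b * norm x) * norm v"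
      using dp_bound[of "A x" v] mult_right_mono[OF A_bound norm_ge_zero] by (rule order_trans)
    moreover have "\<bar>blinfun_apply \<xi> (\<iota> v)\<bar> \<le> norm \<xi> * norm (\<iota> v)"
      using norm_blinfun[of \<xi> "\<iota> v"] by simp
    moreover have "\<dots> \<le> d * (1 + k * norm x) * (k * norm v)"
      using \<xi>_bound \<iota>_bound[of v] \<open>0 \<le> d\<close> \<open>0 \<le> k\<close> by (intro mult_mono) auto
    moreover have "inner y (jV v) = dp g v - dp (A x) v - blinfun_apply \<xi> (\<iota> v)"
      using equation[of v] by simp
    ultimately have "\<bar>inner y (jV v)\<bar>
        \<le> norm g * norm v + (a + b * norm x) * norm v + d * (1 + k * norm x) * (k * norm v)"
      using dp_bound[of g v] by linarith
    also have "\<dots> = B * norm v"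
      by (simp add: B_def power2_eq_square algebra_simps)
    finally show ?thesis .
  qed
  then have "vstar_norm jV y \<le> B"
    by (rule vstar_norm_le[OF \<open>bounded_linear jV\<close> \<open>0 \<le> B\<close>])
  moreover have "0 \<le> vstar_norm jV y"
    unfolding vstar_norm_def
    using bounded_linear_compose[OF bounded_linear_inner_right \<open>bounded_linear jV\<close>]
    by (rule onorm_pos_le)
  ultimately have "(vstar_norm jV y)\<^sup>2 \<le> B\<^sup>2"
    by (simp add: power_mono)
  then show ?thesis
    using square_add3_le[of "norm g" "a + k * d" "(b + k\<^sup>2 * d) * norm x"] by (simp add: B_def)
qed

locale rothe_setting =
  fixes dp :: "'d::{banach,second_countable_topology} \<Rightarrow> 'v::real_normed_vector \<Rightarrow> real"
    and jV :: "'v \<Rightarrow> 'h::real_inner" and \<iota> :: "'v \<Rightarrow> 'u::real_normed_vector"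
    and A :: "'v \<Rightarrow> 'd" and J :: "'u \<Rightarrow> real" and f :: "real \<Rightarrow> 'd"
    and T a b \<alpha> \<beta> d C :: real
  assumes dual_pairing: "is_dual_pairing dp"
    and jV_linear: "bounded_linear jV" and \<iota>_linear: "bounded_linear \<iota>"
    and T_pos: "T > 0"
    and A_bound: "\<forall>v. norm (A v) \<le> a + b * norm v" and a_nonneg: "a \<ge> 0" and b_pos: "b > 0"
    and A_coercive: "\<forall>v. dp (A v) v \<ge> \<alpha> * (norm v)\<^sup>2 - \<beta> * (norm (jV v))\<^sup>2"
    and \<alpha>_pos: "\<alpha> > 0" and \<beta>_nonneg: "\<beta> \<ge> 0"
    and subgradient_bound: "\<forall>x. \<forall>\<xi>\<in>clarke_subdiff J x. norm \<xi> \<le> d * (1 + norm x)"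
    and d_pos: "d > 0"
    \<comment> \<open>Ehrling's inequality with the weight that lets coercivity absorb the subgradient term\<close>
    and ehrling: "\<forall>v. (norm (\<iota> v))\<^sup>2 \<le> \<alpha> / (8 * d) * (norm v)\<^sup>2 + C * (norm (jV v))\<^sup>2"
    and C_nonneg: "C \<ge> 0"
    and f_L2: "set_integrable lborel {0..T} (\<lambda>t. (norm (f t))\<^sup>2)"
begin

interpretation jV: bounded_linear jV
  by (fact jV_linear)

definition K :: real where
  "K = \<beta> + 2 * d * C"

definition f_norm_sq :: real where
  "f_norm_sq = (LINT t:{0..T}|lborel. (norm (f t))\<^sup>2)"

definition energy_const :: "real \<Rightarrow> real" where
  "energy_const H0 = exp (8 * K * T) * (4 * H0\<^sup>2 + 8 * (5 * f_norm_sq / \<alpha> + d * T / 4))"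

lemma K_nonneg: "K \<ge> 0"
  using \<beta>_nonneg d_pos C_nonneg by (simp add: K_def)

lemma small_step_of_less:
  assumes "T / real N < 1 / (8 * K + 1)"
  shows "8 * K * (T / real N) \<le> 1"
proof -
  have "T / real N * (8 * K + 1) < 1"
    using assms K_nonneg by (simp add: less_divide_eq)
  moreover have "8 * K * (T / real N) \<le> T / real N * (8 * K + 1)"
    using T_pos by (simp add: algebra_simps)
  ultimately show ?thesis
    by linarith
qed

lemma f_norm_sq_nonneg: "f_norm_sq \<ge> 0"
  unfolding f_norm_sq_def set_lebesgue_integral_def by (rule integral_nonneg_AE) simp

lemma tested_inequality:
  assumes sol: "rothe_solution dp jV A J \<iota> f T N u \<xi>" and "n \<in> {1..N}"
  shows "inner (jV (bdf2_quotient (T / real N) u n)) (jV (u n)) + \<alpha> / 2 * (norm (u n))\<^sup>2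
           \<le> (norm (rothe_f f (T / real N) n))\<^sup>2 / \<alpha> + d / 4 + K * (norm (jV (u n)))\<^sup>2"
  unfolding K_def
proof (rule energy_estimate_of_tested_equation)
  show "\<bar>dp e v\<bar> \<le> norm e * norm v" for e v
    using dual_pairing by (rule dual_pairing_bound)
  show "norm (\<xi> n) \<le> d * (1 + norm (\<iota> (u n)))"
    using subgradient_bound rothe_solutionD(2)[OF assms] by blast
  show "inner (jV (bdf2_quotient (T / real N) u n)) (jV (u n)) + dp (A (u n)) (u n)
      + blinfun_apply (\<xi> n) (\<iota> (u n)) = dp (rothe_f f (T / real N) n) (u n)"
    by (rule rothe_solutionD(1)[OF assms])
qed (use A_coercive ehrling \<alpha>_pos d_pos in auto)

lemma energy_inequality:
  assumes sol: "rothe_solution dp jV A J \<iota> f T N u \<xi>" and "N \<ge> 1"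
    and small: "8 * K * (T / real N) \<le> 1"
  shows "bdf2_energy_inequality (\<lambda>n. jV (u n)) (\<lambda>n. \<alpha> / 2 * (norm (u n))\<^sup>2)
           (\<lambda>n. (norm (rothe_f f (T / real N) n))\<^sup>2 / \<alpha> + d / 4) (T / real N) K N"
proof -
  define \<tau> where "\<tau> = T / real N"
  have "\<tau> > 0"
    using T_pos \<open>N \<ge> 1\<close> by (simp add: \<tau>_def)
  have scaled: "inner (jV (if n = 1 then u 1 - u 0 else (3/2) *\<^sub>R u n - 2 *\<^sub>R u (n - 1) + (1/2) *\<^sub>R u (n - 2)))
        (jV (u n)) + \<tau> * (\<alpha> / 2 * (norm (u n))\<^sup>2)
      \<le> \<tau> * ((norm (rothe_f f \<tau> n))\<^sup>2 / \<alpha> + d / 4) + \<tau> * K * (norm (jV (u n)))\<^sup>2"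
    if "n \<in> {1..N}" for n
  proof -
    have "\<tau> * (inner (jV (bdf2_quotient \<tau> u n)) (jV (u n)) + \<alpha> / 2 * (norm (u n))\<^sup>2)
        \<le> \<tau> * ((norm (rothe_f f \<tau> n))\<^sup>2 / \<alpha> + d / 4 + K * (norm (jV (u n)))\<^sup>2)"
      using tested_inequality[OF sol that] \<open>\<tau> > 0\<close> by (intro mult_left_mono) (auto simp: \<tau>_def)
    with \<open>\<tau> > 0\<close> show ?thesis
      by (simp add: bdf2_quotient_def jV.scaleR algebra_simps)
  qed
  show ?thesis
    unfolding \<tau>_def[symmetric]
  proof
    show "\<tau> > 0" "K \<ge> 0" "8 * K * \<tau> \<le> 1" "N \<ge> 1"
      using \<open>\<tau> > 0\<close> K_nonneg small \<open>N \<ge> 1\<close> by (auto simp: \<tau>_def)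
    show "0 \<le> \<alpha> / 2 * (norm (u n))\<^sup>2" "0 \<le> (norm (rothe_f f \<tau> n))\<^sup>2 / \<alpha> + d / 4" for n
      using \<alpha>_pos d_pos by auto
    show "inner (jV (u 1) - jV (u 0)) (jV (u 1)) + \<tau> * (\<alpha> / 2 * (norm (u 1))\<^sup>2)
        \<le> \<tau> * ((norm (rothe_f f \<tau> 1))\<^sup>2 / \<alpha> + d / 4) + \<tau> * K * (norm (jV (u 1)))\<^sup>2"
      using scaled[of 1] \<open>N \<ge> 1\<close> by (simp add: jV.diff)
    show "inner ((3/2) *\<^sub>R jV (u n) - 2 *\<^sub>R jV (u (n - 1)) + (1/2) *\<^sub>R jV (u (n - 2))) (jV (u n))
          + \<tau> * (\<alpha> / 2 * (norm (u n))\<^sup>2)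
        \<le> \<tau> * ((norm (rothe_f f \<tau> n))\<^sup>2 / \<alpha> + d / 4) + \<tau> * K * (norm (jV (u n)))\<^sup>2"
      if "n \<in> {2..N}" for n
      using scaled[of n] that by (simp add: jV.diff jV.add jV.scaleR)
  qed
qed

lemma data_sum_le:
  assumes "N \<ge> 1"
  shows "T / real N * (\<Sum>n=1..N. (norm (rothe_f f (T / real N) n))\<^sup>2 / \<alpha> + d / 4)
           \<le> 5 * f_norm_sq / \<alpha> + d * T / 4"
proof -
  define \<tau> where "\<tau> = T / real N"
  have T_eq: "real N * \<tau> = T"
    using \<open>N \<ge> 1\<close> by (simp add: \<tau>_def)
  have "\<tau> * (\<Sum>n=1..N. (norm (rothe_f f \<tau> n))\<^sup>2) \<le> 5 * f_norm_sq"
    using rothe_f_sum_sq_le[OF T_pos \<open>N \<ge> 1\<close> f_L2] by (simp add: \<tau>_def f_norm_sq_def)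
  then have "(\<tau> * (\<Sum>n=1..N. (norm (rothe_f f \<tau> n))\<^sup>2)) / \<alpha> + d * (real N * \<tau>) / 4
      \<le> 5 * f_norm_sq / \<alpha> + d * T / 4"
    using \<alpha>_pos T_eq by (simp add: divide_right_mono)
  then show ?thesis
    unfolding \<tau>_def[symmetric]
    by (simp add: sum.distrib sum_divide_distrib[symmetric] algebra_simps)
qed

lemma energy_estimates:
  assumes sol: "rothe_solution dp jV A J \<iota> f T N u \<xi>" and "N \<ge> 1"
    and small: "8 * K * (T / real N) \<le> 1" and H0: "norm (jV (u 0)) \<le> H0"
  shows "\<forall>n\<le>N. (norm (jV (u n)))\<^sup>2 \<le> energy_const H0"
    and "(\<Sum>n=2..N. (norm (jV (u n - 2 *\<^sub>R u (n - 1) + u (n - 2))))\<^sup>2) \<le> energy_const H0"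
    and "T / real N * (\<Sum>n=1..N. (norm (u n))\<^sup>2) \<le> 2 / \<alpha> * energy_const H0"
proof -
  define \<tau> where "\<tau> = T / real N"
  have T_eq: "real N * \<tau> = T"
    using \<open>N \<ge> 1\<close> by (simp add: \<tau>_def)
  interpret E: bdf2_energy_inequality "\<lambda>n. jV (u n)" "\<lambda>n. \<alpha> / 2 * (norm (u n))\<^sup>2"
    "\<lambda>n. (norm (rothe_f f \<tau> n))\<^sup>2 / \<alpha> + d / 4" \<tau> K N
    unfolding \<tau>_def by (rule energy_inequality[OF sol \<open>N \<ge> 1\<close> small])
  have "(norm (jV (u 0)))\<^sup>2 \<le> H0\<^sup>2"
    using H0 by (simp add: power_mono)
  with data_sum_le[OF \<open>N \<ge> 1\<close>]
  have "4 * (norm (jV (u 0)))\<^sup>2 + 8 * (\<tau> * (\<Sum>n=1..N. (norm (rothe_f f \<tau> n))\<^sup>2 / \<alpha> + d / 4))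
      \<le> 4 * H0\<^sup>2 + 8 * (5 * f_norm_sq / \<alpha> + d * T / 4)"
    unfolding \<tau>_def[symmetric] by (intro add_mono mult_left_mono) simp_all
  then have "exp (8 * K * T) * (4 * (norm (jV (u 0)))\<^sup>2
      + 8 * (\<tau> * (\<Sum>n=1..N. (norm (rothe_f f \<tau> n))\<^sup>2 / \<alpha> + d / 4))) \<le> energy_const H0"
    unfolding energy_const_def by (rule mult_left_mono) simp
  then have bound: "E.energy_bound \<le> energy_const H0"
    unfolding E.energy_bound_def by (simp add: T_eq[symmetric] ac_simps)
  then show "\<forall>n\<le>N. (norm (jV (u n)))\<^sup>2 \<le> energy_const H0"
    using E.norm_sq_le_energy_bound by (blast intro: order_trans)
  show "(\<Sum>n=2..N. (norm (jV (u n - 2 *\<^sub>R u (n - 1) + u (n - 2))))\<^sup>2) \<le> energy_const H0"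
    using E.sum_second_difference_le bound by (simp add: jV.diff jV.add jV.scaleR)
  have "\<tau> * (\<Sum>n=1..N. \<alpha> / 2 * (norm (u n))\<^sup>2) = \<alpha> / 2 * (\<tau> * (\<Sum>n=1..N. (norm (u n))\<^sup>2))"
    by (subst sum_distrib_left[symmetric]) (simp add: ac_simps)
  then have "\<alpha> / 2 * (\<tau> * (\<Sum>n=1..N. (norm (u n))\<^sup>2)) \<le> energy_const H0"
    using E.sum_p_le bound by linarith
  then show "T / real N * (\<Sum>n=1..N. (norm (u n))\<^sup>2) \<le> 2 / \<alpha> * energy_const H0"
    using \<alpha>_pos by (simp add: \<tau>_def field_simps)
qed

lemma norm_\<iota>_le: "norm (\<iota> v) \<le> onorm \<iota> * norm v"
  using onorm[OF \<iota>_linear] by simp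

lemma sum_subgradient_sq_le:
  assumes sol: "rothe_solution dp jV A J \<iota> f T N u \<xi>" and "N \<ge> 1"
    and S: "T / real N * (\<Sum>n=1..N. (norm (u n))\<^sup>2) \<le> S"
  shows "T / real N * (\<Sum>n=1..N. (norm (\<xi> n))\<^sup>2) \<le> 2 * d\<^sup>2 * (T + (onorm \<iota>)\<^sup>2 * S)"
proof -
  have "(norm (\<xi> n))\<^sup>2 \<le> 2 * d\<^sup>2 + 2 * d\<^sup>2 * (onorm \<iota>)\<^sup>2 * (norm (u n))\<^sup>2" if "n \<in> {1..N}" for n
  proof -
    have "norm (\<xi> n) \<le> d * (1 + norm (\<iota> (u n)))"
      using subgradient_bound rothe_solutionD(2)[OF sol that] by blast
    also have "\<dots> \<le> d * (1 + onorm \<iota> * norm (u n))"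
      using norm_\<iota>_le d_pos by (intro mult_left_mono add_left_mono) auto
    finally have "(norm (\<xi> n))\<^sup>2 \<le> (d * (1 + onorm \<iota> * norm (u n)))\<^sup>2"
      by (intro power_mono) auto
    also have "\<dots> = d\<^sup>2 * (1 + onorm \<iota> * norm (u n))\<^sup>2"
      by (simp add: power_mult_distrib)
    also have "\<dots> \<le> d\<^sup>2 * (2 * 1\<^sup>2 + 2 * (onorm \<iota> * norm (u n))\<^sup>2)"
      by (intro mult_left_mono square_add_le) simp
    finally show ?thesis
      by (simp add: power_mult_distrib algebra_simps)
  qed
  then have "T / real N * (\<Sum>n=1..N. (norm (\<xi> n))\<^sup>2)
      \<le> T / real N * (\<Sum>n=1..N. 2 * d\<^sup>2 + 2 * d\<^sup>2 * (onorm \<iota>)\<^sup>2 * (norm (u n))\<^sup>2)"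
    using T_pos by (intro mult_left_mono sum_mono) auto
  also have "\<dots> = 2 * d\<^sup>2 * (T + (onorm \<iota>)\<^sup>2 * (T / real N * (\<Sum>n=1..N. (norm (u n))\<^sup>2)))"
    using \<open>N \<ge> 1\<close> by (simp add: sum.distrib sum_distrib_left[symmetric] algebra_simps)
  also have "\<dots> \<le> 2 * d\<^sup>2 * (T + (onorm \<iota>)\<^sup>2 * S)"
    using S by (intro mult_left_mono add_left_mono) auto
  finally show ?thesis .
qed

lemma sum_vstar_norm_quotient_sq_le:
  assumes sol: "rothe_solution dp jV A J \<iota> f T N u \<xi>" and "N \<ge> 1"
    and S: "T / real N * (\<Sum>n=1..N. (norm (u n))\<^sup>2) \<le> S"
  shows "T / real N * (\<Sum>n=1..N. (vstar_norm jV (jV (bdf2_quotient (T / real N) u n)))\<^sup>2)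
           \<le> 3 * (5 * f_norm_sq + T * (a + onorm \<iota> * d)\<^sup>2 + (b + (onorm \<iota>)\<^sup>2 * d)\<^sup>2 * S)"
proof -
  define \<tau> where "\<tau> = T / real N"
  have "\<tau> > 0" and T_eq: "real N * \<tau> = T"
    using T_pos \<open>N \<ge> 1\<close> by (auto simp: \<tau>_def)
  have "(vstar_norm jV (jV (bdf2_quotient \<tau> u n)))\<^sup>2
      \<le> 3 * (norm (rothe_f f \<tau> n))\<^sup>2 + 3 * (a + onorm \<iota> * d)\<^sup>2
        + 3 * (b + (onorm \<iota>)\<^sup>2 * d)\<^sup>2 * (norm (u n))\<^sup>2"
    if "n \<in> {1..N}" for n
  proof -
    have "(vstar_norm jV (jV (bdf2_quotient \<tau> u n)))\<^sup>2
        \<le> 3 * (norm (rothe_f f \<tau> n))\<^sup>2 + 3 * (a + onorm \<iota> * d)\<^sup>2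
          + 3 * ((b + (onorm \<iota>)\<^sup>2 * d) * norm (u n))\<^sup>2"
    proof (rule vstar_norm_sq_le_of_equation)
      show "\<bar>dp e v\<bar> \<le> norm e * norm v" for e v
        using dual_pairing by (rule dual_pairing_bound)
      show "norm (\<xi> n) \<le> d * (1 + norm (\<iota> (u n)))"
        using subgradient_bound rothe_solutionD(2)[OF sol that] by blast
      show "inner (jV (bdf2_quotient \<tau> u n)) (jV v) + dp (A (u n)) v
          + blinfun_apply (\<xi> n) (\<iota> v) = dp (rothe_f f \<tau> n) v" for v
        using rothe_solutionD(1)[OF sol that] by (simp add: \<tau>_def)
    qed (use jV_linear A_bound a_nonneg b_pos norm_\<iota>_le onorm_pos_le[OF \<iota>_linear] d_pos in auto)
    then show ?thesis
      by (simp add: power_mult_distrib)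
  qed
  then have "\<tau> * (\<Sum>n=1..N. (vstar_norm jV (jV (bdf2_quotient \<tau> u n)))\<^sup>2)
      \<le> \<tau> * (\<Sum>n=1..N. 3 * (norm (rothe_f f \<tau> n))\<^sup>2 + 3 * (a + onorm \<iota> * d)\<^sup>2
            + 3 * (b + (onorm \<iota>)\<^sup>2 * d)\<^sup>2 * (norm (u n))\<^sup>2)"
    using \<open>\<tau> > 0\<close> by (intro mult_left_mono sum_mono) auto
  also have "\<dots> = 3 * (\<tau> * (\<Sum>n=1..N. (norm (rothe_f f \<tau> n))\<^sup>2) + (real N * \<tau>) * (a + onorm \<iota> * d)\<^sup>2
      + (b + (onorm \<iota>)\<^sup>2 * d)\<^sup>2 * (\<tau> * (\<Sum>n=1..N. (norm (u n))\<^sup>2)))"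
    by (simp add: sum.distrib sum_distrib_left sum_distrib_right algebra_simps)
  also have "\<dots> \<le> 3 * (5 * f_norm_sq + T * (a + onorm \<iota> * d)\<^sup>2 + (b + (onorm \<iota>)\<^sup>2 * d)\<^sup>2 * S)"
    using rothe_f_sum_sq_le[OF T_pos \<open>N \<ge> 1\<close> f_L2] S T_eq
    by (intro mult_left_mono add_mono) (auto simp: \<tau>_def f_norm_sq_def)
  finally show ?thesis
    unfolding \<tau>_def .
qed

definition a_priori_const :: "real \<Rightarrow> real \<Rightarrow> real" where
  "a_priori_const H0 c0 = c0\<^sup>2 + 2 / \<alpha> * energy_const H0 + (1 + energy_const H0)
     + 2 * d\<^sup>2 * (T + (onorm \<iota>)\<^sup>2 * (2 / \<alpha> * energy_const H0))
     + 3 * (5 * f_norm_sq + T * (a + onorm \<iota> * d)\<^sup>2 + (b + (onorm \<iota>)\<^sup>2 * d)\<^sup>2 * (2 / \<alpha> * energy_const H0))"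

lemma energy_const_nonneg: "energy_const H0 \<ge> 0"
  using f_norm_sq_nonneg \<alpha>_pos d_pos T_pos by (simp add: energy_const_def)

lemma a_priori_const_ge:
  shows "c\<^sup>2 + 2 / \<alpha> * energy_const H \<le> a_priori_const H c"
    and "1 + energy_const H \<le> a_priori_const H c"
    and "2 * d\<^sup>2 * (T + (onorm \<iota>)\<^sup>2 * (2 / \<alpha> * energy_const H)) \<le> a_priori_const H c"
    and "3 * (5 * f_norm_sq + T * (a + onorm \<iota> * d)\<^sup>2 + (b + (onorm \<iota>)\<^sup>2 * d)\<^sup>2 * (2 / \<alpha> * energy_const H))
           \<le> a_priori_const H c"
proof -
  have "0 \<le> 2 / \<alpha> * energy_const H"
    using \<alpha>_pos energy_const_nonneg by simp
  moreover have "0 \<le> 2 * d\<^sup>2 * (T + (onorm \<iota>)\<^sup>2 * (2 / \<alpha> * energy_const H))"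
    using T_pos \<alpha>_pos energy_const_nonneg by (intro mult_nonneg_nonneg add_nonneg_nonneg) auto
  moreover have "0 \<le> 3 * (5 * f_norm_sq + T * (a + onorm \<iota> * d)\<^sup>2
      + (b + (onorm \<iota>)\<^sup>2 * d)\<^sup>2 * (2 / \<alpha> * energy_const H))"
    using T_pos \<alpha>_pos energy_const_nonneg f_norm_sq_nonneg
    by (intro mult_nonneg_nonneg add_nonneg_nonneg) auto
  ultimately show "c\<^sup>2 + 2 / \<alpha> * energy_const H \<le> a_priori_const H c"
    and "1 + energy_const H \<le> a_priori_const H c"
    and "2 * d\<^sup>2 * (T + (onorm \<iota>)\<^sup>2 * (2 / \<alpha> * energy_const H)) \<le> a_priori_const H c"
    and "3 * (5 * f_norm_sq + T * (a + onorm \<iota> * d)\<^sup>2 + (b + (onorm \<iota>)\<^sup>2 * d)\<^sup>2 * (2 / \<alpha> * energy_const H))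
           \<le> a_priori_const H c"
    using energy_const_nonneg[of H] zero_le_power2[of c] unfolding a_priori_const_def by linarith+
qed

lemma sum_norm_sq_le:
  assumes sol: "rothe_solution dp jV A J \<iota> f T N u \<xi>" and "N \<ge> 1"
    and small: "8 * K * (T / real N) \<le> 1"
    and H0: "norm (jV (u 0)) \<le> H0" and c0: "norm (u 0) \<le> c0 / sqrt (T / real N)"
  shows "T / real N * (\<Sum>n=0..N. (norm (u n))\<^sup>2) \<le> c0\<^sup>2 + 2 / \<alpha> * energy_const H0"
proof -
  define \<tau> where "\<tau> = T / real N"
  have "\<tau> > 0"
    using T_pos \<open>N \<ge> 1\<close> by (simp add: \<tau>_def)
  have "(norm (u 0))\<^sup>2 \<le> (c0 / sqrt \<tau>)\<^sup>2"
    using c0 by (intro power_mono) (auto simp: \<tau>_def)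
  with \<open>\<tau> > 0\<close> have "\<tau> * (norm (u 0))\<^sup>2 \<le> c0\<^sup>2"
    by (simp add: power_divide field_simps)
  moreover have "\<tau> * (\<Sum>n=0..N. (norm (u n))\<^sup>2) = \<tau> * (norm (u 0))\<^sup>2 + \<tau> * (\<Sum>n=1..N. (norm (u n))\<^sup>2)"
    by (simp add: sum.atLeast_Suc_atMost distrib_left)
  ultimately show ?thesis
    using energy_estimates(3)[OF assms(1-4), folded \<tau>_def] unfolding \<tau>_def[symmetric] by linarith
qed

lemma a_priori_estimates:
  assumes sol: "rothe_solution dp jV A J \<iota> f T N u \<xi>" and "N \<ge> 1"
    and small: "8 * K * (T / real N) \<le> 1"
    and H0: "norm (jV (u 0)) \<le> H0" and c0: "norm (u 0) \<le> c0 / sqrt (T / real N)"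
  shows "let \<tau> = T / real N in
                 \<tau> * (\<Sum>n=0..N. (norm (u n))\<^sup>2) \<le> a_priori_const H0 c0
               \<and> (\<forall>n\<le>N. norm (jV (u n)) < a_priori_const H0 c0)
               \<and> \<tau> * (\<Sum>n=1..N. (norm (\<xi> n))\<^sup>2) \<le> a_priori_const H0 c0
               \<and> \<tau> * (vstar_norm jV (jV ((1 / \<tau>) *\<^sub>R (u 1 - u 0))))\<^sup>2 \<le> a_priori_const H0 c0
               \<and> \<tau> * (\<Sum>n=2..N. (vstar_norm jV (jV ((1 / \<tau>) *\<^sub>R
                      ((3/2) *\<^sub>R u n - 2 *\<^sub>R u (n - 1) + (1/2) *\<^sub>R u (n - 2)))))\<^sup>2)
                   \<le> a_priori_const H0 c0
               \<and> (\<Sum>n=2..N. (norm (jV (u n - 2 *\<^sub>R u (n - 1) + u (n - 2))))\<^sup>2) \<le> a_priori_const H0 c0"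
proof -
  define \<tau> where "\<tau> = T / real N"
  have "\<tau> > 0"
    using T_pos \<open>N \<ge> 1\<close> by (simp add: \<tau>_def)
  note energy = energy_estimates[OF sol \<open>N \<ge> 1\<close> small H0]
  have jV_u: "norm (jV (u n)) < 1 + energy_const H0" if "n \<le> N" for n
  proof -
    have "norm (jV (u n)) < 1 + (norm (jV (u n)))\<^sup>2"
      using zero_le_power2[of "norm (jV (u n)) - 1/2"] by (simp add: power2_eq_square algebra_simps)
    with energy(1) that show ?thesis
      by fastforce
  qed
  let ?q = "\<lambda>n. (vstar_norm jV (jV (bdf2_quotient \<tau> u n)))\<^sup>2"
  have sum_q: "\<tau> * (\<Sum>n=1..N. ?q n) \<le> a_priori_const H0 c0"
    using order_trans[OF sum_vstar_norm_quotient_sq_le[OF sol \<open>N \<ge> 1\<close> energy(3)] a_priori_const_ge(4)]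
    unfolding \<tau>_def .
  have "\<tau> * ?q 1 \<le> \<tau> * (\<Sum>n=1..N. ?q n)" and "\<tau> * (\<Sum>n=2..N. ?q n) \<le> \<tau> * (\<Sum>n=1..N. ?q n)"
    using \<open>\<tau> > 0\<close> \<open>N \<ge> 1\<close> by (auto intro!: mult_left_mono member_le_sum sum_mono2)
  moreover have "(\<Sum>n=2..N. (vstar_norm jV (jV ((1 / \<tau>) *\<^sub>R
      ((3/2) *\<^sub>R u n - 2 *\<^sub>R u (n - 1) + (1/2) *\<^sub>R u (n - 2)))))\<^sup>2) = (\<Sum>n=2..N. ?q n)"
    by (intro sum.cong) (auto simp: bdf2_quotient_def)
  moreover have "\<tau> * (\<Sum>n=1..N. (norm (\<xi> n))\<^sup>2) \<le> a_priori_const H0 c0"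
    using order_trans[OF sum_subgradient_sq_le[OF sol \<open>N \<ge> 1\<close> energy(3)] a_priori_const_ge(3)]
    unfolding \<tau>_def .
  moreover have "norm (jV (u n)) < a_priori_const H0 c0" if "n \<le> N" for n
    using less_le_trans[OF jV_u[OF that] a_priori_const_ge(2)] .
  moreover have "(\<Sum>n=2..N. (norm (jV (u n - 2 *\<^sub>R u (n - 1) + u (n - 2))))\<^sup>2) \<le> a_priori_const H0 c0"
    using energy(2) a_priori_const_ge(2)[of H0 c0] by linarith
  ultimately show ?thesis
    using sum_norm_sq_le[OF assms] sum_q a_priori_const_ge(1)[where H = H0 and c = c0]
    unfolding Let_def \<tau>_def[symmetric]
    by (simp add: bdf2_quotient_def)
qed

end

theorem lemma4p1:
  fixes dp :: "'d::{banach,second_countable_topology} \<Rightarrow> 'v::banach \<Rightarrow> real"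
    and jV :: "'v \<Rightarrow> 'h::{real_inner,complete_space}"
    and iVZ :: "'v \<Rightarrow> 'z::banach" and iZH :: "'z \<Rightarrow> 'h" and \<iota>2 :: "'z \<Rightarrow> 'u::banach"
    and \<iota> :: "'v \<Rightarrow> 'u"
    and A :: "'v \<Rightarrow> 'd" and J :: "'u \<Rightarrow> real" and f :: "real \<Rightarrow> 'd"
    and T a b \<alpha> \<beta> d c0 :: real and u0 :: 'h and u0s :: "nat \<Rightarrow> 'v"
  assumes V_dual: "is_dual_pairing dp"
    and V_refl: "reflexive_via dp"
    and V_sep: "separable_space TYPE('v)"
    and H_sep: "separable_space TYPE('h)"
    and jV_lin: "bounded_linear jV" and jV_inj: "inj jV"
    and jV_dense: "closure (range jV) = UNIV"
    and jV_compact: "compact_op jV"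
    and U_refl: "reflexive_space TYPE('u)"
    and T_pos: "T > 0"
    (* H(A) *)
    and A_pm: "pseudomonotone dp A"
    and a_nonneg: "a \<ge> 0" and b_pos: "b > 0"
    and A_bound: "\<forall>v. norm (A v) \<le> a + b * norm v"
    and \<alpha>_pos: "\<alpha> > 0" and \<beta>_nonneg: "\<beta> \<ge> 0"
    and A_coerc: "\<forall>v. dp (A v) v \<ge> \<alpha> * (norm v)\<^sup>2 - \<beta> * (norm (jV v))\<^sup>2"
    (* H(J) *)
    and J_lip: "locally_lipschitz J"
    and d_pos: "d > 0"
    and J_bound: "\<forall>x. \<forall>\<xi>\<in>clarke_subdiff J x. norm \<xi> \<le> d * (1 + norm x)"
    (* H(iota) *)
    and \<iota>_lin: "bounded_linear \<iota>" and \<iota>_compact: "compact_op \<iota>"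
    and iVZ_lin: "bounded_linear iVZ" and iVZ_inj: "inj iVZ" and iVZ_compact: "compact_op iVZ"
    and iZH_lin: "bounded_linear iZH" and iZH_inj: "inj iZH"
    and emb_compat: "\<forall>v. iZH (iVZ v) = jV v"
    and \<iota>2_lin: "bounded_linear \<iota>2"
    and \<iota>_fact: "\<forall>v. \<iota> v = \<iota>2 (iVZ v)"
    (* H(f) *)
    and f_meas: "set_borel_measurable lborel {0..T} f"
    and f_L2: "set_integrable lborel {0..T} (\<lambda>t. (norm (f t))\<^sup>2)"
    (* initial data of the scheme, indexed by N with tau = T/N *)
    and u0s_conv: "(\<lambda>N. jV (u0s N)) \<longlonglongrightarrow> u0"
    and u0s_bound: "\<forall>N\<ge>1. norm (u0s N) \<le> c0 / sqrt (T / real N)"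
  shows "\<exists>\<tau>0>0. \<exists>c>0. \<forall>N\<ge>1. T / real N < \<tau>0 \<longrightarrow>
           (\<forall>u \<xi>. u 0 = u0s N \<and> rothe_solution dp jV A J \<iota> f T N u \<xi> \<longrightarrow>
              (let \<tau> = T / real N in
                 \<tau> * (\<Sum>n=0..N. (norm (u n))\<^sup>2) \<le> c
               \<and> (\<forall>n\<le>N. norm (jV (u n)) < c)
               \<and> \<tau> * (\<Sum>n=1..N. (norm (\<xi> n))\<^sup>2) \<le> c
               \<and> \<tau> * (vstar_norm jV (jV ((1 / \<tau>) *\<^sub>R (u 1 - u 0))))\<^sup>2 \<le> c
               \<and> \<tau> * (\<Sum>n=2..N. (vstar_norm jV (jV ((1 / \<tau>) *\<^sub>R
                      ((3/2) *\<^sub>R u n - 2 *\<^sub>R u (n - 1) + (1/2) *\<^sub>R u (n - 2)))))\<^sup>2) \<le> c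
               \<and> (\<Sum>n=2..N. (norm (jV (u n - 2 *\<^sub>R u (n - 1) + u (n - 2))))\<^sup>2) \<le> c))"
proof -
  \<comment> \<open>Reflexivity, separability, density, pseudomonotonicity of A and the Lipschitz continuity
     of J only matter for the existence of solutions of the scheme, not for these estimates.\<close>
  have "\<alpha> / (8 * d) > 0"
    using \<alpha>_pos d_pos by simp
  then obtain C where "C \<ge> 0"
    and C: "\<forall>v. (norm (\<iota>2 (iVZ v)))\<^sup>2 \<le> \<alpha> / (8 * d) * (norm v)\<^sup>2 + C * (norm (iZH (iVZ v)))\<^sup>2"
    using ehrling_inequality[OF iVZ_compact iVZ_lin iZH_lin iZH_inj \<iota>2_lin] by blast
  interpret rothe_setting dp jV \<iota> A J f T a b \<alpha> \<beta> d C
  proof (rule rothe_setting.intro)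
    show "\<forall>v. (norm (\<iota> v))\<^sup>2 \<le> \<alpha> / (8 * d) * (norm v)\<^sup>2 + C * (norm (jV v))\<^sup>2"
      using C \<iota>_fact emb_compat by simp
  qed fact+
  obtain H0 where H0: "\<And>N. norm (jV (u0s N)) \<le> H0"
    using convergent_imp_Bseq[OF convergentI[OF u0s_conv]] unfolding Bseq_def by blast
  have c_pos: "0 < a_priori_const H0 c0"
    using a_priori_const_ge(2)[of H0 c0] energy_const_nonneg[of H0] by linarith
  show ?thesis
    by (rule exI[of _ "1 / (8 * K + 1)"],
        intro conjI exI[of _ "a_priori_const H0 c0"] allI impI a_priori_estimates small_step_of_less)
      (use K_nonneg c_pos H0 u0s_bound in auto)
qed

end
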